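(* Let $l$ be a positive integer, $\epsilon\in(0,1)$, $\varphi\in\mathbb{R}$, and let $N$ be a positive integer with $N\ge 5.34\ln(4l/\epsilon)$. Let $N_x\sim\mathrm{Bin}\big(N,(1+\cos(2\pi\varphi))/2\big)$ and $N_y\sim\mathrm{Bin}\big(N,(1+\sin(2\pi\varphi))/2\big)$ be independent. Then $$\Pr\Big(\Big|\frac{N_x}{N}-\frac{1+\cos(2\pi\varphi)}{2}\Big|\le 0.306\Big)\ge\sqrt{1-\epsilon/l},\qquad \Pr\Big(\Big|\frac{N_y}{N}-\frac{1+\sin(2\pi\varphi)}{2}\Big|\le 0.306\Big)\ge\sqrt{1-\epsilon/l},$$ and, with $t=\frac{1}{2\pi}\big(\mathrm{atan2}(2N_y/N-1,2N_x/N-1)\big)_{\mathrm{mod}\,2\pi}$ and $x=(t-1/6)_{\mathrm{mod}\,1}$, the probability that $\big((\varphi)_{\mathrm{mod}\,1}-x\big)_{\mathrm{mod}\,1}\in(0,1/3)$ is at least $1-\epsilon/l$.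
   Context: $N_x$ and $N_y$ model the numbers of outcomes $1$ in $N$ measurements of the qubit state $(|0\rangle+e^{i2\pi\varphi}|1\rangle)/\sqrt2$ with the POVMs $\{|\psi_x\rangle\langle\psi_x|,\mathbb{I}-|\psi_x\rangle\langle\psi_x|\}$, $|\psi_x\rangle=(|0\rangle+|1\rangle)/\sqrt2$, and $\{|\psi_y\rangle\langle\psi_y|,\mathbb{I}-|\psi_y\rangle\langle\psi_y|\}$, $|\psi_y\rangle=(|0\rangle+i|1\rangle)/\sqrt2$, respectively. $(a)_{\mathrm{mod}\,c}$ is the representative of $a$ in $[0,c)$; $\mathrm{atan2}(y,x)$ is the polar angle of $(x,y)$ (with any fixed convention at $(0,0)$). *)

theory Defs
  imports "HOL-Probability.Probability"
begin

definition rmod :: "real \<Rightarrow> real \<Rightarrow> real" where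
  "rmod a c = a - c * of_int \<lfloor>a / c\<rfloor>"

text \<open>atan2(y,x): polar angle of (x,y), in (-pi,pi]; convention atan2(0,0) = 0.\<close>
definition atan2 :: "real \<Rightarrow> real \<Rightarrow> real" where
  "atan2 y x = Arg (Complex x y)"

definition px :: "real \<Rightarrow> real" where
  "px \<phi> = (1 + cos (2 * pi * \<phi>)) / 2"

definition py :: "real \<Rightarrow> real" where
  "py \<phi> = (1 + sin (2 * pi * \<phi>)) / 2"

definition NxNy :: "nat \<Rightarrow> real \<Rightarrow> (nat \<times> nat) pmf" where
  "NxNy N \<phi> = pair_pmf (binomial_pmf N (px \<phi>)) (binomial_pmf N (py \<phi>))"

definition est_t :: "nat \<Rightarrow> nat \<Rightarrow> nat \<Rightarrow> real" where
  "est_t N nx ny = rmod (atan2 (2 * real ny / real N - 1) (2 * real nx / real N - 1)) (2 * pi) / (2 * pi)"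

definition est_x :: "nat \<Rightarrow> nat \<Rightarrow> nat \<Rightarrow> real" where
  "est_x N nx ny = rmod (est_t N nx ny - 1/6) 1"

end

theory Submission
  imports Defs
begin

text \<open>
  The two marginal bounds are Hoeffding's inequality for the binomial distribution with
  accuracy \<open>0.306\<close>; since \<open>1 - q / 2 \<ge> sqrt (1 - q)\<close> and \<open>(1 - q / 2)\<^sup>2 \<ge> 1 - q\<close>, independence
  gives probability at least \<open>1 - q\<close> that both empirical frequencies are \<open>0.306\<close>-accurate.
  In that event the point \<open>(2 N\<^sub>x / N - 1, 2 N\<^sub>y / N - 1)\<close> lies within distance
  \<open>sqrt 2 * 0.612 < sqrt 3 / 2\<close> of \<open>cis (2 pi \<phi>)\<close>, so its polar angle differs from \<open>2 pi \<phi>\<close>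
  (modulo \<open>2 pi\<close>) by some \<open>\<alpha>\<close> with \<open>\<bar>\<alpha>\<bar> < pi / 3\<close>. Then \<open>(\<phi> - x) mod 1 = 1 / 6 - \<alpha> / (2 pi)\<close>,
  which lies in \<open>(0, 1 / 3)\<close>.
\<close>

lemma rmod_add_of_int_mult: "c \<noteq> 0 \<Longrightarrow> rmod (a + of_int k * c) c = rmod a c"
  by (simp add: rmod_def add_divide_distrib algebra_simps)

lemma rmod_eq_self: "0 \<le> a \<Longrightarrow> a < c \<Longrightarrow> rmod a c = a"
  by (simp add: rmod_def floor_eq_iff)

lemma rmod_diff_rmod_left: "c \<noteq> 0 \<Longrightarrow> rmod (rmod a c - b) c = rmod (a - b) c"
  using rmod_add_of_int_mult[of c "a - b" "- \<lfloor>a / c\<rfloor>"] by (simp add: rmod_def algebra_simps)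

lemma rmod_diff_rmod_right: "c \<noteq> 0 \<Longrightarrow> rmod (a - rmod b c) c = rmod (a - b) c"
  using rmod_add_of_int_mult[of c "a - b" "\<lfloor>b / c\<rfloor>"] by (simp add: rmod_def algebra_simps)

lemma rmod_divide: "c > 0 \<Longrightarrow> rmod a c / c = rmod (a / c) 1"
  by (simp add: rmod_def diff_divide_distrib)

lemma Re_Im_near_one:
  fixes w :: complex
  assumes "cmod (w - 1) < sqrt 3 / 2"
  shows "Re w > 0" and "\<bar>Im w\<bar> < sqrt 3 * Re w"
proof -
  define x where "x = Re w - 1"
  define y where "y = Im w"
  have "x\<^sup>2 + y\<^sup>2 = (cmod (w - 1))\<^sup>2"
    by (simp add: x_def y_def cmod_power2)
  also have "\<dots> < (sqrt 3 / 2)\<^sup>2"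
    using assms by (simp add: power_strict_mono)
  finally have xy: "x\<^sup>2 + y\<^sup>2 < 3 / 4"
    by (simp add: power_divide)
  hence "x\<^sup>2 < 1"
    using zero_le_power2[of y] by linarith
  hence "\<bar>x\<bar> < 1"
    by (simp add: abs_square_less_1)
  thus "Re w > 0" by (simp add: x_def)
  have "3 * (1 + x)\<^sup>2 - y\<^sup>2 = (2 * x + 3 / 2)\<^sup>2 + (3 / 4 - (x\<^sup>2 + y\<^sup>2))"
    by (simp add: power2_eq_square algebra_simps)
  moreover have "(sqrt 3 * (1 + x))\<^sup>2 = 3 * (1 + x)\<^sup>2"
    by (simp add: power_mult_distrib)
  ultimately have "y\<^sup>2 < (sqrt 3 * (1 + x))\<^sup>2"
    using xy zero_le_power2[of "2 * x + 3 / 2"] by linarith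
  thus "\<bar>Im w\<bar> < sqrt 3 * Re w"
    using \<open>\<bar>x\<bar> < 1\<close> by (simp add: x_def y_def power2_less_imp_less)
qed

lemma Arg_near_one:
  assumes "cmod (w - 1) < sqrt 3 / 2"
  shows "\<bar>Arg w\<bar> < pi / 3"
proof -
  have Re: "Re w > 0" and Im: "\<bar>Im w\<bar> < sqrt 3 * Re w"
    using Re_Im_near_one[OF assms] by auto
  have "\<bar>Arg w\<bar> = arctan \<bar>Im w / Re w\<bar>"
    using Re by (simp add: arg_conv_arctan abs_arctan)
  also have "\<dots> < arctan (sqrt 3)"
    using Re Im by (simp add: arctan_less_iff divide_less_eq)
  also have "arctan (sqrt 3) = pi / 3"
    using arctan_tan[of "pi / 3"] by (simp add: tan_60)
  finally show ?thesis .
qed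

lemma Arg_rotate:
  assumes "z \<noteq> 0"
  obtains n :: int where "Arg z = \<theta> + Arg (z * cis (- \<theta>)) + of_int n * 2 * pi"
proof -
  define w where "w = z * cis (- \<theta>)"
  have w: "w \<noteq> 0" using assms by (simp add: w_def)
  have "cis (Arg z - \<theta> - Arg w) = cis (Arg z) * cis (- \<theta>) / cis (Arg w)"
    by (simp add: cis_mult cis_divide)
  also have "\<dots> = sgn z * cis (- \<theta>) / sgn w"
    using assms w by (simp add: cis_Arg)
  also have "\<dots> = 1"
    using assms by (simp add: w_def sgn_mult sgn_eq_0_iff)
  finally have "cos (Arg z - \<theta> - Arg w) = 1"
    by (metis cis.sel(1) one_complex.sel(1))
  then obtain n :: int where "Arg z - \<theta> - Arg w = of_int n * 2 * pi"
    using cos_one_2pi_int by blast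
  thus ?thesis using that by (simp add: w_def algebra_simps)
qed

lemma phase_estimate_in_sector:
  fixes a b \<phi> :: real
  assumes "cmod (Complex a b - cis (2 * pi * \<phi>)) < sqrt 3 / 2"
  shows "rmod (rmod \<phi> 1 - rmod (rmod (Arg (Complex a b)) (2 * pi) / (2 * pi) - 1 / 6) 1) 1
           \<in> {0<..<1 / 3}"
proof -
  define z where "z = Complex a b"
  define \<alpha> where "\<alpha> = Arg (z * cis (- (2 * pi * \<phi>)))"
  have "cmod (z * cis (- (2 * pi * \<phi>)) - 1) = cmod ((z - cis (2 * pi * \<phi>)) * cis (- (2 * pi * \<phi>)))"
    by (simp add: algebra_simps cis_mult)
  also have "\<dots> < sqrt 3 / 2"
    using assms by (simp add: z_def norm_mult)
  finally have \<alpha>: "\<bar>\<alpha>\<bar> < pi / 3"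
    unfolding \<alpha>_def by (rule Arg_near_one)
  have "sqrt 3 < 2"
    using real_sqrt_less_mono[of 3 4] by simp
  hence "z \<noteq> 0"
    using assms by (auto simp: z_def)
  then obtain n :: int where n: "Arg z = 2 * pi * \<phi> + \<alpha> + of_int n * 2 * pi"
    unfolding \<alpha>_def by (rule Arg_rotate)
  define y where "y = 1 / 6 - \<alpha> / (2 * pi)"
  have y: "0 < y" "y < 1 / 3"
    using \<alpha> pi_gt_zero by (auto simp: y_def field_simps abs_less_iff)
  have "\<phi> - (Arg z / (2 * pi) - 1 / 6) = y + of_int (- n) * 1"
    by (simp add: n y_def field_simps)
  hence "rmod (rmod \<phi> 1 - rmod (rmod (Arg z) (2 * pi) / (2 * pi) - 1 / 6) 1) 1
           = rmod (y + of_int (- n) * 1) 1"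
    by (simp add: rmod_divide rmod_diff_rmod_left rmod_diff_rmod_right)
  also have "\<dots> = rmod y 1"
    by (rule rmod_add_of_int_mult) simp
  also have "\<dots> = y"
    using y by (simp add: rmod_eq_self)
  finally have "rmod (rmod \<phi> 1 - rmod (rmod (Arg z) (2 * pi) / (2 * pi) - 1 / 6) 1) 1 = y" .
  thus ?thesis
    using y by (simp add: z_def)
qed

lemma est_x_in_sector:
  assumes "\<bar>real nx / real N - px \<phi>\<bar> \<le> 0.306" and "\<bar>real ny / real N - py \<phi>\<bar> \<le> 0.306"
  shows "rmod (rmod \<phi> 1 - est_x N nx ny) 1 \<in> {0<..<1 / 3}"
proof -
  define a where "a = 2 * real nx / real N - 1"
  define b where "b = 2 * real ny / real N - 1"
  have "a - cos (2 * pi * \<phi>) = 2 * (real nx / real N - px \<phi>)"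
    by (simp add: a_def px_def algebra_simps)
  hence "\<bar>a - cos (2 * pi * \<phi>)\<bar> \<le> 0.612"
    using assms(1) by (simp only: abs_mult) simp
  hence "(a - cos (2 * pi * \<phi>))\<^sup>2 \<le> 0.612\<^sup>2"
    by (metis abs_ge_zero power2_abs power_mono)
  moreover have "b - sin (2 * pi * \<phi>) = 2 * (real ny / real N - py \<phi>)"
    by (simp add: b_def py_def algebra_simps)
  hence "\<bar>b - sin (2 * pi * \<phi>)\<bar> \<le> 0.612"
    using assms(2) by (simp only: abs_mult) simp
  hence "(b - sin (2 * pi * \<phi>))\<^sup>2 \<le> 0.612\<^sup>2"
    by (metis abs_ge_zero power2_abs power_mono)
  ultimately have "(cmod (Complex a b - cis (2 * pi * \<phi>)))\<^sup>2 < (sqrt 3 / 2)\<^sup>2"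
    \<comment> \<open>\<open>2 * 0.612\<^sup>2 < 3 / 4\<close>: this is where the accuracy 0.306 comes from\<close>
    by (simp add: cmod_power2 power_divide)
  hence "cmod (Complex a b - cis (2 * pi * \<phi>)) < sqrt 3 / 2"
    by (rule power2_less_imp_less) simp
  thus ?thesis
    unfolding est_x_def est_t_def atan2_def a_def b_def by (rule phase_estimate_in_sector)
qed

lemma binomial_prob_abs_le_ge:
  fixes p \<delta> :: real
  assumes "p \<in> {0..1}" and "N > 0" and "\<delta> \<ge> 0"
  shows "measure_pmf.prob (binomial_pmf N p) {x. \<bar>real x / real N - p\<bar> \<le> \<delta>}
           \<ge> 1 - 2 * exp (- 2 * real N * \<delta>\<^sup>2)"
proof -
  interpret binomial_distribution N p
    using assms(1) by unfold_locales
  let ?M = "binomial_pmf N p"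
  have "1 = measure_pmf.prob ?M ({x. \<bar>real x / real N - p\<bar> \<le> \<delta>} \<union> {x. \<bar>real x / real N - p\<bar> \<ge> \<delta>})"
    by (subst set_eq_subset[THEN iffD2], auto)
  also have "\<dots> \<le> measure_pmf.prob ?M {x. \<bar>real x / real N - p\<bar> \<le> \<delta>}
                  + measure_pmf.prob ?M {x. \<bar>real x / real N - p\<bar> \<ge> \<delta>}"
    by (rule measure_Un_le) auto
  moreover have "measure_pmf.prob ?M {x. \<bar>real x / real N - p\<bar> \<ge> \<delta>} \<le> 2 * exp (- 2 * real N * \<delta>\<^sup>2)"
    using prob_abs_ge'[OF assms(2,3)] by simp
  ultimately show ?thesis by linarith
qed

text \<open>Since \<open>5.34 \<ge> 1 / (2 * 0.306\<^sup>2)\<close>, Hoeffding's bound \<open>2 * exp (- 2 * N * 0.306\<^sup>2)\<close> is at most \<open>q / 2\<close>.\<close>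

lemma binomial_prob_close_ge:
  fixes p q :: real
  assumes "p \<in> {0..1}" and "N > 0" and "0 < q" and "q \<le> 4"
    and "real N \<ge> 5.34 * ln (4 / q)"
  shows "measure_pmf.prob (binomial_pmf N p) {x. \<bar>real x / real N - p\<bar> \<le> 0.306} \<ge> 1 - q / 2"
proof -
  have "0 \<le> ln (4 / q)"
    using assms(3,4) by simp
  hence "ln (4 / q) \<le> 2 * real N * 0.306\<^sup>2"
    using assms(5) by (simp add: power2_eq_square)
  hence "exp (- 2 * real N * 0.306\<^sup>2) \<le> exp (- ln (4 / q))"
    by simp
  also have "\<dots> = q / 4"
    using assms(3) by (simp add: exp_minus)
  finally show ?thesis
    using binomial_prob_abs_le_ge[OF assms(1,2), of "0.306"] by simp
qed

lemma sqrt_one_minus_le: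
  assumes "q \<le> 2"
  shows "sqrt (1 - q) \<le> 1 - q / 2"
proof (rule real_le_lsqrt)
  show "1 - q \<le> (1 - q / 2)\<^sup>2"
    by (simp add: power2_eq_square algebra_simps)
qed (use assms in simp)

lemma prob_NxNy_Times:
  "measure_pmf.prob (NxNy N \<phi>) (A \<times> B)
     = measure_pmf.prob (binomial_pmf N (px \<phi>)) A * measure_pmf.prob (binomial_pmf N (py \<phi>)) B"
  unfolding NxNy_def by (rule measure_pmf_prob_product) simp_all

lemma prob_NxNy_fst:
  "measure_pmf.prob (NxNy N \<phi>) {(nx, ny). P nx} = measure_pmf.prob (binomial_pmf N (px \<phi>)) {nx. P nx}"
proof -
  have "{(nx, ny). P nx} = {nx. P nx} \<times> (UNIV :: nat set)" by auto
  then show ?thesis by (simp only: prob_NxNy_Times) simp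
qed

lemma prob_NxNy_snd:
  "measure_pmf.prob (NxNy N \<phi>) {(nx, ny). P ny} = measure_pmf.prob (binomial_pmf N (py \<phi>)) {ny. P ny}"
proof -
  have "{(nx, ny). P ny} = (UNIV :: nat set) \<times> {ny. P ny}" by auto
  then show ?thesis by (simp only: prob_NxNy_Times) simp
qed

lemma px_in_unit: "px \<phi> \<in> {0..1}"
  unfolding px_def atLeastAtMost_iff
  using cos_ge_minus_one[of "2 * pi * \<phi>"] cos_le_one[of "2 * pi * \<phi>"] by argo

lemma py_in_unit: "py \<phi> \<in> {0..1}"
  unfolding py_def atLeastAtMost_iff
  using sin_ge_minus_one[of "2 * pi * \<phi>"] sin_le_one[of "2 * pi * \<phi>"] by argo

theorem mainTheorem3:
  fixes l N :: nat and \<epsilon> \<phi> :: real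
  assumes "l > 0" and "0 < \<epsilon>" and "\<epsilon> < 1" and "N > 0"
    and "real N \<ge> 5.34 * ln (4 * real l / \<epsilon>)"
  shows "measure_pmf.prob (NxNy N \<phi>) {(nx, ny). \<bar>real nx / real N - px \<phi>\<bar> \<le> 0.306}
           \<ge> sqrt (1 - \<epsilon> / real l)
       \<and> measure_pmf.prob (NxNy N \<phi>) {(nx, ny). \<bar>real ny / real N - py \<phi>\<bar> \<le> 0.306}
           \<ge> sqrt (1 - \<epsilon> / real l)
       \<and> measure_pmf.prob (NxNy N \<phi>)
           {(nx, ny). rmod (rmod \<phi> 1 - est_x N nx ny) 1 \<in> {0<..<1/3}}
           \<ge> 1 - \<epsilon> / real l"
proof -
  define q where "q = \<epsilon> / real l"
  have q: "0 < q" "q < 1"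
    using assms(1-3) by (auto simp: q_def field_simps)
  have N: "real N \<ge> 5.34 * ln (4 / q)"
    using assms(5) by (simp add: q_def)
  define A where "A = {nx. \<bar>real nx / real N - px \<phi>\<bar> \<le> 0.306}"
  define B where "B = {ny. \<bar>real ny / real N - py \<phi>\<bar> \<le> 0.306}"
  have PA: "measure_pmf.prob (binomial_pmf N (px \<phi>)) A \<ge> 1 - q / 2"
    unfolding A_def using q by (intro binomial_prob_close_ge px_in_unit assms(4) N) auto
  have PB: "measure_pmf.prob (binomial_pmf N (py \<phi>)) B \<ge> 1 - q / 2"
    unfolding B_def using q by (intro binomial_prob_close_ge py_in_unit assms(4) N) auto
  have sq: "sqrt (1 - q) \<le> 1 - q / 2"
    using q by (intro sqrt_one_minus_le) simp
  have "1 - q \<le> (1 - q / 2) * (1 - q / 2)"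
    by (simp add: algebra_simps)
  also have "\<dots> \<le> measure_pmf.prob (NxNy N \<phi>) (A \<times> B)"
    unfolding prob_NxNy_Times using PA PB q by (intro mult_mono) auto
  also have "\<dots> \<le> measure_pmf.prob (NxNy N \<phi>) {(nx, ny). rmod (rmod \<phi> 1 - est_x N nx ny) 1 \<in> {0<..<1/3}}"
    using est_x_in_sector by (intro measure_pmf.finite_measure_mono) (auto simp: A_def B_def)
  finally show ?thesis
    using order_trans[OF sq PA] order_trans[OF sq PB]
    unfolding q_def[symmetric] prob_NxNy_fst prob_NxNy_snd A_def B_def by blast
qed

end
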